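(* Under the setting below, for any sequences generated by Algorithm BC (with arbitrary index selection) the following hold: (i) for every $k$, $\Phi^{\mathrm{FB}}_\Gamma(\bm x^{k+1})\le\Phi^{\mathrm{FB}}_\Gamma(\bm x^k)-\sum_{i\in I^{k+1}}\frac{\xi_i}{2\gamma_i}\|z_i^k-x_i^k\|^2$, where $\xi_i:=\frac{N-\gamma_iL_{f_i}}{N}>0$; (ii) $(\Phi^{\mathrm{FB}}_\Gamma(\bm x^k))_k$ is monotonically nonincreasing and converges to a finite value $\Phi_\star\ge\min\Phi$; (iii) $\Phi^{\mathrm{FB}}_\Gamma$ is constant, equal to $\Phi_\star$, on the set of accumulation points of $(\bm x^k)$; (iv) $\sum_k\|\bm x^{k+1}-\bm x^k\|^2<\infty$; (v) if $\Phi$ is coercive, then $(\bm x^k)$ and $(\bm z^k)$ are bounded.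
   Context: Setting: $N\ge1$, $n=\sum_{i=1}^N n_i$, $\bm x=(x_1,\dots,x_N)$ with $x_i\in\mathbb R^{n_i}$; $\Phi=F+G$ with $F(\bm x)=\frac1N\sum_i f_i(x_i)$, each $f_i:\mathbb R^{n_i}\to\mathbb R$ differentiable with $L_{f_i}$-Lipschitz gradient, $G:\mathbb R^n\to\mathbb R\cup\{+\infty\}$ proper lsc, $\arg\min\Phi\ne\emptyset$. $\gamma_i\in(0,N/L_{f_i})$, $\Gamma=\operatorname{blockdiag}(\gamma_1I_{n_1},\dots,\gamma_NI_{n_N})$, $\|x\|_V^2=\langle x,Vx\rangle$, $\operatorname{prox}_G^{V}(u)=\arg\min_w\{G(w)+\frac12\|w-u\|_V^2\}$, $\mathbf T(\bm x)=\operatorname{prox}_G^{\Gamma^{-1}}(\bm x-\Gamma\nabla F(\bm x))$. Forward-backward envelope: $\Phi^{\mathrm{FB}}_\Gamma(\bm x):=\inf_{\bm w}\{F(\bm x)+\langle\nabla F(\bm x),\bm w-\bm x\rangle+G(\bm w)+\frac12\|\bm w-\bm x\|^2_{\Gamma^{-1}}\}$. Algorithm BC: given $\bm x^0\in\mathbb R^n$, for $k=0,1,\dots$: pick $\bm z^k\in\mathbf T(\bm x^k)$; select a set of indices $I^{k+1}\subseteq[N]$; set $x_i^{k+1}=z_i^k$ for $i\in I^{k+1}$ and $x_i^{k+1}=x_i^k$ for $i\notin I^{k+1}$. *)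

theory Defs
  imports "HOL-Analysis.Analysis"
begin

(* Block setting: coordinates indexed by a finite type 'n (so R^n = real^'n),
   blocks indexed by a finite type 'b (so N = CARD('b)), and blk j is the block
   containing coordinate j. Block i is R^{n_i} with n_i = card {j. blk j = i}. *)

definition lsc :: "('a::topological_space \<Rightarrow> ereal) \<Rightarrow> bool" where
  "lsc G \<longleftrightarrow> (\<forall>x. G x \<le> Liminf (at x) G)"

definition proper_fun :: "('a \<Rightarrow> ereal) \<Rightarrow> bool" where
  "proper_fun G \<longleftrightarrow> (\<forall>x. G x \<noteq> -\<infinity>) \<and> (\<exists>x. G x \<noteq> \<infinity>)"

definition blk_part :: "('n \<Rightarrow> 'b) \<Rightarrow> 'b \<Rightarrow> real^'n \<Rightarrow> real^'n" where
  "blk_part blk i x = (\<chi> j. if blk j = i then x $ j else 0)"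

definition Fsum :: "('b::finite \<Rightarrow> real^'n \<Rightarrow> real) \<Rightarrow> real^'n \<Rightarrow> real" where
  "Fsum f x = (1 / real CARD('b)) * (\<Sum>i\<in>UNIV. f i x)"

definition gradF :: "('b::finite \<Rightarrow> real^'n \<Rightarrow> real^'n) \<Rightarrow> real^'n \<Rightarrow> real^'n" where
  "gradF gf x = (1 / real CARD('b)) *\<^sub>R (\<Sum>i\<in>UNIV. gf i x)"

definition Gam_mul :: "('n \<Rightarrow> 'b) \<Rightarrow> ('b \<Rightarrow> real) \<Rightarrow> real^'n \<Rightarrow> real^'n" where
  "Gam_mul blk gam v = (\<chi> j. gam (blk j) * v $ j)"

definition wnorm_sq :: "('n::finite \<Rightarrow> 'b) \<Rightarrow> ('b \<Rightarrow> real) \<Rightarrow> real^'n \<Rightarrow> real" where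
  "wnorm_sq blk gam v = (\<Sum>j\<in>UNIV. (v $ j)^2 / gam (blk j))"

definition prox_set :: "('n::finite \<Rightarrow> 'b) \<Rightarrow> ('b \<Rightarrow> real) \<Rightarrow> (real^'n \<Rightarrow> ereal)
    \<Rightarrow> real^'n \<Rightarrow> (real^'n) set" where
  "prox_set blk gam G u = {w. \<forall>w'. G w + ereal (wnorm_sq blk gam (w - u) / 2)
                                 \<le> G w' + ereal (wnorm_sq blk gam (w' - u) / 2)}"

definition Tmap :: "('n::finite \<Rightarrow> 'b::finite) \<Rightarrow> ('b \<Rightarrow> real) \<Rightarrow> ('b \<Rightarrow> real^'n \<Rightarrow> real^'n)
    \<Rightarrow> (real^'n \<Rightarrow> ereal) \<Rightarrow> real^'n \<Rightarrow> (real^'n) set" where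
  "Tmap blk gam gf G x = prox_set blk gam G (x - Gam_mul blk gam (gradF gf x))"

definition Phi :: "('b::finite \<Rightarrow> real^'n \<Rightarrow> real) \<Rightarrow> (real^'n \<Rightarrow> ereal) \<Rightarrow> real^'n \<Rightarrow> ereal" where
  "Phi f G x = ereal (Fsum f x) + G x"

definition FBE :: "('n::finite \<Rightarrow> 'b::finite) \<Rightarrow> ('b \<Rightarrow> real) \<Rightarrow> ('b \<Rightarrow> real^'n \<Rightarrow> real)
    \<Rightarrow> ('b \<Rightarrow> real^'n \<Rightarrow> real^'n) \<Rightarrow> (real^'n \<Rightarrow> ereal) \<Rightarrow> real^'n \<Rightarrow> ereal" where
  "FBE blk gam f gf G x = (INF w. ereal (Fsum f x + gradF gf x \<bullet> (w - x)) + G w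
                                  + ereal (wnorm_sq blk gam (w - x) / 2))"

end

theory Submission
  imports Defs
begin

text \<open>
  The envelope at \<open>x\<close> is the infimum over \<open>w\<close> of \<open>G w\<close> plus the quadratic model
  \<open>\<ell>(x, w) = F x + \<langle>\<nabla>F x, w - x\<rangle> + \<parallel>w - x\<parallel>\<^sup>2/2\<close> (norm weighted by \<open>\<Gamma>\<^sup>-\<^sup>1\<close>), and
  the infimum is attained at every \<open>z \<in> T x\<close>. Since \<open>F\<close> is block separable, \<open>\<ell>(x, z)\<close> is a sum
  of block terms; replacing \<open>x\<^sub>i\<close> by \<open>z\<^sub>i\<close> turns the \<open>i\<close>-th term into \<open>f\<^sub>i(z\<^sub>i)/N\<close>, which the
  blockwise descent lemma bounds by the old term minus \<open>\<xi>\<^sub>i/(2\<gamma>\<^sub>i) \<parallel>z\<^sub>i - x\<^sub>i\<parallel>\<^sup>2\<close>. Evaluating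
  the envelope at \<open>x\<^sup>k\<^sup>+\<^sup>1\<close> with the old point \<open>z\<^sup>k\<close> gives the sufficient decrease; the same
  descent lemma shows that the envelope dominates \<open>\<Phi>(z\<^sup>k) \<ge> min \<Phi>\<close>, which yields convergence,
  square summability of the steps and, under coercivity, boundedness. At an accumulation
  point the envelope is upper semicontinuous, being an infimum of continuous functions of
  \<open>x\<close>, and lower semicontinuity of \<open>G\<close> at a cluster point of the \<open>z\<^sup>k\<close> gives the reverse bound.
\<close>

lemma blk_part_nth: "blk_part blk i v $ j = (if blk j = i then v $ j else 0)"
  by (simp add: blk_part_def)

lemma blk_part_diff: "blk_part blk i (u - v) = blk_part blk i u - blk_part blk i v"
  by (simp add: blk_part_def vec_eq_iff)

lemma blk_part_scaleR: "blk_part blk i (t *\<^sub>R v) = t *\<^sub>R blk_part blk i v"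
  by (simp add: blk_part_def vec_eq_iff)

lemma power2_norm_blk_part:
  "(norm (blk_part blk i (v::real^'n::finite)))\<^sup>2 = (\<Sum>j\<in>UNIV. if blk j = i then (v $ j)\<^sup>2 else 0)"
  unfolding power2_norm_eq_inner inner_vec_def
  by (rule sum.cong) (auto simp: blk_part_nth power2_eq_square)

lemma norm_blk_part_le: "norm (blk_part blk i (v::real^'n::finite)) \<le> norm v"
proof -
  have "(norm (blk_part blk i v))\<^sup>2 \<le> (norm v)\<^sup>2"
    unfolding power2_norm_eq_inner inner_vec_def by (rule sum_mono) (simp add: blk_part_nth)
  then show ?thesis by (simp add: power2_le_iff_abs_le)
qed

lemma wnorm_sq_eq_sum_blocks:
  fixes blk :: "'n::finite \<Rightarrow> 'b::finite"
  shows "wnorm_sq blk gam v = (\<Sum>i\<in>UNIV. (norm (blk_part blk i v))\<^sup>2 / gam i)"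
proof -
  have "(\<Sum>i\<in>UNIV. (norm (blk_part blk i v))\<^sup>2 / gam i)
      = (\<Sum>i\<in>UNIV. \<Sum>j\<in>UNIV. if blk j = i then (v $ j)\<^sup>2 / gam i else 0)"
    unfolding power2_norm_blk_part sum_divide_distrib by (intro sum.cong) auto
  also have "\<dots> = (\<Sum>j\<in>UNIV. \<Sum>i\<in>UNIV. if blk j = i then (v $ j)\<^sup>2 / gam i else 0)"
    by (rule sum.swap)
  also have "\<dots> = wnorm_sq blk gam v"
    unfolding wnorm_sq_def by (simp add: eq_commute[of "blk _"])
  finally show ?thesis by simp
qed

lemma power2_norm_eq_sum_blocks:
  fixes blk :: "'n::finite \<Rightarrow> 'b::finite"
  shows "(norm (v::real^'n))\<^sup>2 = (\<Sum>i\<in>UNIV. (norm (blk_part blk i v))\<^sup>2)"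
proof -
  have "(norm v)\<^sup>2 = wnorm_sq blk (\<lambda>_. 1) v"
    unfolding power2_norm_eq_inner inner_vec_def wnorm_sq_def by (simp add: power2_eq_square)
  then show ?thesis by (simp add: wnorm_sq_eq_sum_blocks)
qed

lemma wnorm_sq_add_Gam_mul:
  assumes "\<And>i. gam i \<noteq> 0"
  shows "wnorm_sq blk gam (v + Gam_mul blk gam g)
    = wnorm_sq blk gam v + 2 * (g \<bullet> v) + (\<Sum>j\<in>UNIV. gam (blk j) * (g $ j)\<^sup>2)"
proof -
  have "wnorm_sq blk gam (v + Gam_mul blk gam g)
     = (\<Sum>j\<in>UNIV. (v $ j)\<^sup>2 / gam (blk j) + 2 * (g $ j * v $ j) + gam (blk j) * (g $ j)\<^sup>2)"
    unfolding wnorm_sq_def Gam_mul_def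
    using assms by (intro sum.cong) (simp_all add: field_simps power2_eq_square)
  then show ?thesis
    unfolding sum.distrib wnorm_sq_def inner_vec_def by (simp add: sum_distrib_left)
qed

lemma lsc_le_lim:
  fixes G :: "'a::metric_space \<Rightarrow> ereal"
  assumes "lsc G" and "y \<longlonglongrightarrow> q" and "(\<lambda>k. G (y k)) \<longlonglongrightarrow> l"
  shows "G q \<le> l"
proof (rule dense_le)
  fix c assume c: "c < G q"
  with assms(1) have "eventually (\<lambda>u. c < G u) (at q)"
    unfolding lsc_def using le_Liminf_iff by blast
  with c have "eventually (\<lambda>u. c < G u) (nhds q)"
    by (simp add: eventually_nhds_conv_at)
  from eventually_compose_filterlim[OF this assms(2)]
  have "eventually (\<lambda>k. c \<le> G (y k)) sequentially"
    by (auto elim: eventually_mono)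
  then show "c \<le> l"
    using assms(3) by (intro tendsto_lowerbound) auto
qed

locale block_smooth =
  fixes blk :: "'n::finite \<Rightarrow> 'b::finite"
    and f :: "'b \<Rightarrow> real^'n \<Rightarrow> real"
    and gf :: "'b \<Rightarrow> real^'n \<Rightarrow> real^'n"
    and L :: "'b \<Rightarrow> real"
  assumes f_block: "\<And>i u v. blk_part blk i u = blk_part blk i v \<Longrightarrow> f i u = f i v"
    and f_grad: "\<And>i u. (f i has_derivative (\<lambda>h. gf i u \<bullet> h)) (at u)"
    and L_nonneg: "\<And>i. L i \<ge> 0"
    and f_lip: "\<And>i u v. norm (gf i u - gf i v) \<le> L i * norm (blk_part blk i (u - v))"
begin

lemma has_real_derivative_along_line:
  "((\<lambda>t. f i (x + t *\<^sub>R d)) has_real_derivative (gf i (x + t *\<^sub>R d) \<bullet> d)) (at t)"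
proof -
  have "((\<lambda>s. x + s *\<^sub>R d) has_derivative (\<lambda>s. s *\<^sub>R d)) (at t)"
    by (auto intro!: derivative_eq_intros)
  from has_derivative_compose[OF this f_grad]
  show ?thesis
    unfolding has_field_derivative_def by (simp add: mult_commute_abs)
qed

lemma gf_nth_outside_block:
  assumes "blk j \<noteq> i"
  shows "gf i u $ j = 0"
proof -
  have "f i (u + t *\<^sub>R axis j 1) = f i u" for t
    using assms by (intro f_block) (simp add: blk_part_def vec_eq_iff axis_def)
  then have "((\<lambda>t. f i (u + t *\<^sub>R axis j 1)) has_real_derivative 0) (at 0)"
    by simp
  with has_real_derivative_along_line[of i u "axis j 1" 0]
  have "gf i u \<bullet> axis j 1 = 0"
    by (simp add: DERIV_unique)
  then show ?thesis by (simp add: inner_axis)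
qed

lemma inner_gf_blk_part: "gf i u \<bullet> blk_part blk i d = gf i u \<bullet> d"
  unfolding inner_vec_def by (rule sum.cong) (auto simp: blk_part_nth gf_nth_outside_block)

lemma gf_block: "blk_part blk i u = blk_part blk i v \<Longrightarrow> gf i u = gf i v"
  using f_lip[of i u v] by (simp add: blk_part_diff)

lemma block_descent:
  "f i w \<le> f i x + gf i x \<bullet> (w - x) + L i / 2 * (norm (blk_part blk i (w - x)))\<^sup>2"
proof -
  define d where "d = w - x"
  define nd where "nd = norm (blk_part blk i d)"
  define \<phi> where "\<phi> t = f i (x + t *\<^sub>R d) - t * (gf i x \<bullet> d) - L i / 2 * t\<^sup>2 * nd\<^sup>2" for t
  have "\<phi> 1 \<le> \<phi> 0"
  proof (rule DERIV_nonpos_imp_nonincreasing[of 0 1 \<phi>])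
    fix t :: real assume t: "0 \<le> t" "t \<le> 1"
    have D: "(\<phi> has_real_derivative (gf i (x + t *\<^sub>R d) \<bullet> d - gf i x \<bullet> d - L i * t * nd\<^sup>2)) (at t)"
      unfolding \<phi>_def
      by (auto intro!: derivative_eq_intros has_real_derivative_along_line)
    have "(gf i (x + t *\<^sub>R d) - gf i x) \<bullet> d = (gf i (x + t *\<^sub>R d) - gf i x) \<bullet> blk_part blk i d"
      by (simp add: inner_diff_left inner_gf_blk_part)
    also have "\<dots> \<le> norm (gf i (x + t *\<^sub>R d) - gf i x) * nd"
      unfolding nd_def by (rule norm_cauchy_schwarz)
    also have "\<dots> \<le> L i * (t * nd) * nd"
      using f_lip[of i "x + t *\<^sub>R d" x] t
      by (auto intro!: mult_right_mono simp: nd_def blk_part_scaleR)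
    finally have "gf i (x + t *\<^sub>R d) \<bullet> d - gf i x \<bullet> d - L i * t * nd\<^sup>2 \<le> 0"
      by (simp add: inner_diff_left power2_eq_square algebra_simps)
    with D show "\<exists>y. (\<phi> has_real_derivative y) (at t) \<and> y \<le> 0" by blast
  qed simp
  then show ?thesis by (simp add: \<phi>_def d_def nd_def)
qed

lemma isCont_f: "isCont (f i) p"
  using f_grad by (rule has_derivative_continuous)

lemma isCont_gf: "isCont (gf i) p"
proof -
  have "(L i)-lipschitz_on UNIV (gf i)"
    unfolding lipschitz_on_def dist_norm
    using f_lip norm_blk_part_le L_nonneg by (meson mult_left_mono order_trans)
  then have "continuous_on UNIV (gf i)" by (rule lipschitz_on_continuous_on)
  then show ?thesis by (simp add: continuous_on_eq_continuous_at)
qed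

end

locale block_forward_backward = block_smooth blk f gf L
  for blk :: "'n::finite \<Rightarrow> 'b::finite"
    and f :: "'b \<Rightarrow> real^'n \<Rightarrow> real"
    and gf :: "'b \<Rightarrow> real^'n \<Rightarrow> real^'n"
    and L :: "'b \<Rightarrow> real" +
  fixes gam :: "'b \<Rightarrow> real"
    and G :: "real^'n \<Rightarrow> ereal"
  assumes gam_pos: "\<And>i. gam i > 0"
    and gam_lt: "\<And>i. gam i * L i < real CARD('b)"
    and G_proper: "proper_fun G"
begin

definition xi :: "'b \<Rightarrow> real" where
  "xi i = (real CARD('b) - gam i * L i) / real CARD('b)"

definition fb_model :: "real^'n \<Rightarrow> real^'n \<Rightarrow> real" where
  "fb_model x w = Fsum f x + gradF gf x \<bullet> (w - x) + wnorm_sq blk gam (w - x) / 2"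

definition fb_model_block :: "'b \<Rightarrow> real^'n \<Rightarrow> real^'n \<Rightarrow> real" where
  "fb_model_block i x w = (f i x + gf i x \<bullet> (w - x)) / real CARD('b)
     + (norm (blk_part blk i (w - x)))\<^sup>2 / (2 * gam i)"

definition block_decrease :: "'b set \<Rightarrow> real^'n \<Rightarrow> real^'n \<Rightarrow> real" where
  "block_decrease J x w = (\<Sum>i\<in>J. xi i / (2 * gam i) * (norm (blk_part blk i (w - x)))\<^sup>2)"

definition decrease_const :: real where
  "decrease_const = Min (range (\<lambda>i. xi i / (2 * gam i)))"

lemma xi_pos: "xi i > 0"
  using gam_lt[of i] by (simp add: xi_def)

lemma decrease_const_pos: "decrease_const > 0"
  unfolding decrease_const_def using xi_pos gam_pos by (subst Min_gr_iff) auto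

lemma decrease_const_le: "decrease_const \<le> xi i / (2 * gam i)"
  unfolding decrease_const_def by (rule Min_le) auto

lemma block_decrease_ge:
  "decrease_const * (\<Sum>i\<in>J. (norm (blk_part blk i (w - x)))\<^sup>2) \<le> block_decrease J x w"
  unfolding block_decrease_def sum_distrib_left
  by (intro sum_mono mult_right_mono decrease_const_le) simp

lemma block_decrease_UNIV_ge: "decrease_const * (norm (w - x))\<^sup>2 \<le> block_decrease UNIV x w"
  by (subst power2_norm_eq_sum_blocks[of _ blk]) (rule block_decrease_ge)

lemma block_decrease_nonneg: "block_decrease J x w \<ge> 0"
  unfolding block_decrease_def using xi_pos gam_pos by (intro sum_nonneg) (simp add: less_imp_le)

lemma fb_model_eq_sum_blocks: "fb_model x w = (\<Sum>i\<in>UNIV. fb_model_block i x w)"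
proof -
  have "fb_model x w = (\<Sum>i\<in>UNIV. f i x) / real CARD('b)
      + (\<Sum>i\<in>UNIV. gf i x \<bullet> (w - x)) / real CARD('b)
      + (\<Sum>i\<in>UNIV. (norm (blk_part blk i (w - x)))\<^sup>2 / gam i) / 2"
    unfolding fb_model_def Fsum_def gradF_def wnorm_sq_eq_sum_blocks[of blk gam]
    by (simp add: inner_sum_left)
  also have "\<dots> = (\<Sum>i\<in>UNIV. fb_model_block i x w)"
    unfolding fb_model_block_def sum.distrib sum_divide_distrib add_divide_distrib
    by (simp add: sum_divide_distrib[symmetric] algebra_simps)
  finally show ?thesis .
qed

text \<open>The identity \<open>\<xi>\<^sub>i/(2\<gamma>\<^sub>i) = 1/(2\<gamma>\<^sub>i) - L\<^sub>i/(2N)\<close> absorbs the curvature term of the descent lemma.\<close>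

lemma block_descent_model:
  "f i w / real CARD('b) + xi i / (2 * gam i) * (norm (blk_part blk i (w - x)))\<^sup>2
    \<le> fb_model_block i x w"
proof -
  have "f i w / real CARD('b)
      \<le> (f i x + gf i x \<bullet> (w - x) + L i / 2 * (norm (blk_part blk i (w - x)))\<^sup>2) / real CARD('b)"
    using block_descent[of i w x] by (simp add: divide_right_mono)
  also have "\<dots> = fb_model_block i x w - xi i / (2 * gam i) * (norm (blk_part blk i (w - x)))\<^sup>2"
    unfolding fb_model_block_def xi_def using gam_pos[of i] by (simp add: field_simps)
  finally show ?thesis by simp
qed

lemma Fsum_add_block_decrease_le: "Fsum f w + block_decrease UNIV x w \<le> fb_model x w"
proof -
  have "Fsum f w + block_decrease UNIV x w
      = (\<Sum>i\<in>UNIV. f i w / real CARD('b) + xi i / (2 * gam i) * (norm (blk_part blk i (w - x)))\<^sup>2)"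
    unfolding Fsum_def block_decrease_def sum.distrib by (simp add: sum_divide_distrib)
  also have "\<dots> \<le> fb_model x w"
    unfolding fb_model_eq_sum_blocks by (rule sum_mono) (rule block_descent_model)
  finally show ?thesis .
qed

lemma fb_model_block_update:
  assumes upd: "\<And>j. x' $ j = (if blk j \<in> J then w $ j else x $ j)"
  shows "fb_model x' w \<le> fb_model x w - block_decrease J x w"
proof -
  have "fb_model_block i x' w
      \<le> fb_model_block i x w - (if i \<in> J then xi i / (2 * gam i) * (norm (blk_part blk i (w - x)))\<^sup>2 else 0)"
    for i
  proof (cases "i \<in> J")
    case True
    then have x'_w: "blk_part blk i x' = blk_part blk i w"
      by (auto simp: vec_eq_iff blk_part_nth upd)
    have "gf i x' \<bullet> (w - x') = 0"
      by (subst inner_gf_blk_part[symmetric]) (simp add: blk_part_diff x'_w)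
    then have "fb_model_block i x' w = f i w / real CARD('b)"
      by (simp add: fb_model_block_def blk_part_diff x'_w f_block[OF x'_w])
    with True block_descent_model[of i w x] show ?thesis by simp
  next
    case False
    then have x'_x: "blk_part blk i x' = blk_part blk i x"
      by (auto simp: vec_eq_iff blk_part_nth upd)
    have "gf i x \<bullet> (w - x') = gf i x \<bullet> (w - x)"
      by (metis inner_gf_blk_part blk_part_diff x'_x)
    then have "fb_model_block i x' w = fb_model_block i x w"
      by (simp add: fb_model_block_def blk_part_diff x'_x f_block[OF x'_x] gf_block[OF x'_x])
    with False show ?thesis by simp
  qed
  then have "fb_model x' w \<le> (\<Sum>i\<in>UNIV. fb_model_block i x w
      - (if i \<in> J then xi i / (2 * gam i) * (norm (blk_part blk i (w - x)))\<^sup>2 else 0))"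
    unfolding fb_model_eq_sum_blocks by (rule sum_mono)
  then show ?thesis
    unfolding sum_subtractf fb_model_eq_sum_blocks block_decrease_def by (simp add: sum.If_cases)
qed

lemma power2_norm_block_update:
  assumes upd: "\<And>j. x' $ j = (if blk j \<in> J then w $ j else x $ j)"
  shows "(norm (x' - x))\<^sup>2 = (\<Sum>i\<in>J. (norm (blk_part blk i (w - x)))\<^sup>2)"
proof -
  have "blk_part blk i (x' - x) = (if i \<in> J then blk_part blk i (w - x) else 0)" for i
    by (auto simp: vec_eq_iff blk_part_nth upd)
  then have "(norm (x' - x))\<^sup>2 = (\<Sum>i\<in>UNIV. if i \<in> J then (norm (blk_part blk i (w - x)))\<^sup>2 else 0)"
    by (subst power2_norm_eq_sum_blocks[of _ blk]) (intro sum.cong, auto)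
  then show ?thesis by (simp add: sum.If_cases)
qed

lemma tendsto_fb_model:
  assumes "(y \<longlongrightarrow> p) F" and "(w \<longlongrightarrow> q) F"
  shows "((\<lambda>k. fb_model (y k) (w k)) \<longlongrightarrow> fb_model p q) F"
proof -
  have "((\<lambda>k. f i (y k)) \<longlongrightarrow> f i p) F" "((\<lambda>k. gf i (y k)) \<longlongrightarrow> gf i p) F" for i
    using isCont_tendsto_compose[OF isCont_f assms(1)] isCont_tendsto_compose[OF isCont_gf assms(1)]
    by auto
  moreover have "((\<lambda>k. wnorm_sq blk gam (w k - y k)) \<longlongrightarrow> wnorm_sq blk gam (q - p)) F"
    unfolding wnorm_sq_def using gam_pos
    by (intro tendsto_intros assms) (auto simp: less_imp_neq[symmetric])
  ultimately show ?thesis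
    unfolding fb_model_def Fsum_def gradF_def by (intro tendsto_intros assms) auto
qed

lemma FBE_eq_INF_fb_model: "FBE blk gam f gf G x = (INF w. ereal (fb_model x w) + G w)"
proof -
  have "ereal (Fsum f x + gradF gf x \<bullet> (w - x)) + G w + ereal (wnorm_sq blk gam (w - x) / 2)
      = ereal (fb_model x w) + G w" for w
    unfolding fb_model_def by (cases "G w") simp_all
  then show ?thesis unfolding FBE_def by presburger
qed

lemma prox_minimizes_fb_model:
  assumes "z \<in> Tmap blk gam gf G x"
  shows "ereal (fb_model x z) + G z \<le> ereal (fb_model x w) + G w"
proof -
  define u where "u = x - Gam_mul blk gam (gradF gf x)"
  define c where "c = (\<Sum>j\<in>UNIV. gam (blk j) * (gradF gf x $ j)\<^sup>2) / 2 - Fsum f x"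
  have shift: "G v + ereal (wnorm_sq blk gam (v - u) / 2) = ereal (fb_model x v) + G v + ereal c" for v
  proof -
    have "v - u = (v - x) + Gam_mul blk gam (gradF gf x)" by (simp add: u_def)
    then have "wnorm_sq blk gam (v - u) = wnorm_sq blk gam (v - x)
        + 2 * (gradF gf x \<bullet> (v - x)) + (\<Sum>j\<in>UNIV. gam (blk j) * (gradF gf x $ j)\<^sup>2)"
      by (simp only:) (rule wnorm_sq_add_Gam_mul, metis gam_pos less_irrefl)
    then have "wnorm_sq blk gam (v - u) / 2 = fb_model x v + c"
      by (simp add: fb_model_def c_def field_simps)
    then show ?thesis by (cases "G v") simp_all
  qed
  from assms have "G z + ereal (wnorm_sq blk gam (z - u) / 2) \<le> G w + ereal (wnorm_sq blk gam (w - u) / 2)"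
    unfolding Tmap_def prox_set_def u_def by blast
  then show ?thesis
    unfolding shift by (simp add: ereal_add_le_add_iff2)
qed

lemma FBE_eq_at_prox:
  "z \<in> Tmap blk gam gf G x \<Longrightarrow> FBE blk gam f gf G x = ereal (fb_model x z) + G z"
  unfolding FBE_eq_INF_fb_model
  by (rule antisym) (auto intro: INF_lower INF_greatest prox_minimizes_fb_model)

lemma G_finite_at_prox:
  assumes "z \<in> Tmap blk gam gf G x"
  shows "G z = ereal (real_of_ereal (G z))"
proof -
  obtain w where "G w \<noteq> \<infinity>" using G_proper unfolding proper_fun_def by blast
  with prox_minimizes_fb_model[OF assms, of w] have "G z \<noteq> \<infinity>" by auto
  moreover have "G z \<noteq> -\<infinity>" using G_proper unfolding proper_fun_def by blast
  ultimately show ?thesis by (cases "G z") auto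
qed

end

locale block_coordinate_iteration = block_forward_backward blk f gf L gam G
  for blk :: "'n::finite \<Rightarrow> 'b::finite"
    and f :: "'b \<Rightarrow> real^'n \<Rightarrow> real"
    and gf :: "'b \<Rightarrow> real^'n \<Rightarrow> real^'n"
    and L gam :: "'b \<Rightarrow> real"
    and G :: "real^'n \<Rightarrow> ereal" +
  fixes x z :: "nat \<Rightarrow> real^'n"
    and I :: "nat \<Rightarrow> 'b set"
  assumes G_lsc: "lsc G"
    and argmin_ne: "\<exists>xs. \<forall>y. Phi f G xs \<le> Phi f G y"
    and z_T: "\<And>k. z k \<in> Tmap blk gam gf G (x k)"
    and x_upd: "\<And>k j. x (Suc k) $ j = (if blk j \<in> I (Suc k) then z k $ j else x k $ j)"
begin

definition env :: "nat \<Rightarrow> real" where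
  "env k = fb_model (x k) (z k) + real_of_ereal (G (z k))"

definition Phi_min :: real where
  "Phi_min = real_of_ereal (INF y. Phi f G y)"

lemma G_z_finite: "G (z k) = ereal (real_of_ereal (G (z k)))"
  by (rule G_finite_at_prox[OF z_T])

lemma FBE_x_eq_env: "FBE blk gam f gf G (x k) = ereal (env k)"
  unfolding FBE_eq_at_prox[OF z_T] env_def by (subst G_z_finite) simp

lemma Phi_z_eq: "Phi f G (z k) = ereal (Fsum f (z k) + real_of_ereal (G (z k)))"
  unfolding Phi_def by (subst G_z_finite) simp

lemma env_Suc_le: "env (Suc k) \<le> env k - block_decrease (I (Suc k)) (x k) (z k)"
proof -
  have "ereal (env (Suc k)) \<le> ereal (fb_model (x (Suc k)) (z k)) + G (z k)"
    unfolding FBE_x_eq_env[symmetric] FBE_eq_INF_fb_model by (rule INF_lower) simp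
  then have "env (Suc k) \<le> fb_model (x (Suc k)) (z k) + real_of_ereal (G (z k))"
    by (subst (asm) G_z_finite) simp
  with fb_model_block_update[OF x_upd[of k]] show ?thesis
    unfolding env_def by linarith
qed

lemma decseq_env: "decseq env"
proof (rule decseq_SucI)
  show "env (Suc k) \<le> env k" for k
    using env_Suc_le[of k] block_decrease_nonneg[of "I (Suc k)" "x k" "z k"] by linarith
qed

lemma INF_Phi_eq: "(INF y. Phi f G y) = ereal Phi_min"
proof -
  obtain xs where xs: "\<And>y. Phi f G xs \<le> Phi f G y" using argmin_ne by blast
  then have inf: "(INF y. Phi f G y) = Phi f G xs"
    by (intro antisym INF_lower INF_greatest) auto
  obtain w where "G w \<noteq> \<infinity>" using G_proper unfolding proper_fun_def by blast
  with xs[of w] have "Phi f G xs \<noteq> \<infinity>" by (auto simp: Phi_def)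
  moreover have "Phi f G xs \<noteq> -\<infinity>"
    using G_proper unfolding proper_fun_def Phi_def by (cases "G xs") auto
  ultimately show ?thesis
    unfolding Phi_min_def inf by (cases "Phi f G xs") auto
qed

lemma Phi_min_add_block_decrease_le: "Phi_min + block_decrease UNIV (x k) (z k) \<le> env k"
proof -
  have "ereal Phi_min \<le> Phi f G (z k)"
    unfolding INF_Phi_eq[symmetric] by (rule INF_lower) simp
  then have "Phi_min \<le> Fsum f (z k) + real_of_ereal (G (z k))"
    by (simp add: Phi_z_eq)
  with Fsum_add_block_decrease_le[of "z k" "x k"] show ?thesis
    unfolding env_def by linarith
qed

lemma env_converges: "\<exists>l. env \<longlonglongrightarrow> l \<and> Phi_min \<le> l"
proof -
  have bound: "Phi_min \<le> env k" for k
    using Phi_min_add_block_decrease_le[of k] block_decrease_nonneg[of UNIV "x k" "z k"] by linarith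
  then obtain l where "env \<longlonglongrightarrow> l"
    using decseq_convergent[OF decseq_env] by blast
  moreover from this bound have "Phi_min \<le> l"
    by (intro LIMSEQ_le_const) auto
  ultimately show ?thesis by blast
qed

lemma bounded_z_minus_x: "bounded (range (\<lambda>k. z k - x k))"
proof -
  have "decrease_const * (norm (z k - x k))\<^sup>2 \<le> env 0 - Phi_min" for k
  proof -
    have "env k \<le> env 0"
      using decseq_env by (simp add: decseq_def)
    with block_decrease_UNIV_ge[of "z k" "x k"] Phi_min_add_block_decrease_le[of k]
    show ?thesis by linarith
  qed
  then have "norm (z k - x k) \<le> sqrt ((env 0 - Phi_min) / decrease_const)" for k
    using decrease_const_pos by (intro real_le_rsqrt) (simp add: field_simps)
  then show ?thesis
    unfolding bounded_iff by blast
qed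

lemma limit_le_FBE_at_accumulation_point:
  assumes r: "strict_mono r" and xr: "(x \<circ> r) \<longlonglongrightarrow> p" and env: "env \<longlonglongrightarrow> l"
  shows "ereal l \<le> FBE blk gam f gf G p"
  unfolding FBE_eq_INF_fb_model
proof (rule INF_greatest)
  fix w
  show "ereal l \<le> ereal (fb_model p w) + G w"
  proof (cases "G w")
    case (real g)
    have "ereal (env (r k)) \<le> ereal (fb_model (x (r k)) w) + G w" for k
      unfolding FBE_x_eq_env[symmetric] FBE_eq_INF_fb_model by (rule INF_lower) simp
    then have "env (r k) \<le> fb_model ((x \<circ> r) k) w + g" for k
      by (simp add: real)
    moreover have "(\<lambda>k. fb_model ((x \<circ> r) k) w + g) \<longlonglongrightarrow> fb_model p w + g"
      by (intro tendsto_intros tendsto_fb_model xr)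
    ultimately have "l \<le> fb_model p w + g"
      using LIMSEQ_subseq_LIMSEQ[OF env r]
      by (intro tendsto_le[OF trivial_limit_sequentially]) (auto simp: comp_def)
    then show ?thesis by (simp add: real)
  next
    case PInf
    then show ?thesis by simp
  next
    case MInf
    with G_proper show ?thesis unfolding proper_fun_def by blast
  qed
qed

lemma FBE_at_accumulation_point_le_limit:
  assumes r: "strict_mono r" and xr: "(x \<circ> r) \<longlonglongrightarrow> p" and env: "env \<longlonglongrightarrow> l"
  shows "FBE blk gam f gf G p \<le> ereal l"
proof -
  have "bounded (range (\<lambda>k. z (r k) - x (r k)))"
    by (rule bounded_subset[OF bounded_z_minus_x]) auto
  moreover have "bounded (range (\<lambda>k. x (r k)))"
    using convergent_imp_bounded[OF xr] by (simp add: comp_def)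
  ultimately have "bounded (range (z \<circ> r))"
    using bounded_plus_comp[of "\<lambda>k. x (r k)" UNIV "\<lambda>k. z (r k) - x (r k)"] by (simp add: comp_def)
  then obtain w s where s: "strict_mono s" and zrs: "(z \<circ> r \<circ> s) \<longlonglongrightarrow> w"
    using bounded_imp_convergent_subsequence by blast
  have "(\<lambda>k. env ((r \<circ> s) k) - fb_model ((x \<circ> r \<circ> s) k) ((z \<circ> r \<circ> s) k)) \<longlonglongrightarrow> l - fb_model p w"
    using LIMSEQ_subseq_LIMSEQ[OF env strict_mono_o[OF r s]]
      tendsto_fb_model[OF LIMSEQ_subseq_LIMSEQ[OF xr s] zrs]
    by (intro tendsto_diff) (simp_all add: comp_def)
  moreover have "G ((z \<circ> r \<circ> s) k)
      = ereal (env ((r \<circ> s) k) - fb_model ((x \<circ> r \<circ> s) k) ((z \<circ> r \<circ> s) k))" for k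
    unfolding env_def comp_def by (subst G_z_finite) simp
  ultimately have "(\<lambda>k. G ((z \<circ> r \<circ> s) k)) \<longlonglongrightarrow> ereal (l - fb_model p w)"
    by (simp add: tendsto_ereal)
  then have "G w \<le> ereal (l - fb_model p w)"
    by (rule lsc_le_lim[OF G_lsc zrs])
  then have "ereal (fb_model p w) + G w \<le> ereal l"
    by (cases "G w") auto
  then show ?thesis
    unfolding FBE_eq_INF_fb_model by (meson INF_lower UNIV_I order_trans)
qed

lemma summable_power2_norm_step: "summable (\<lambda>k. (norm (x (Suc k) - x k))\<^sup>2)"
proof -
  obtain l where "env \<longlonglongrightarrow> l" using env_converges by blast
  then have "summable (\<lambda>k. (env k - env (Suc k)) / decrease_const)"
    by (intro summable_divide telescope_summable')
  then show ?thesis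
  proof (rule summable_comparison_test')
    fix k
    have "decrease_const * (norm (x (Suc k) - x k))\<^sup>2 \<le> block_decrease (I (Suc k)) (x k) (z k)"
      using block_decrease_ge by (simp add: power2_norm_block_update[OF x_upd])
    with env_Suc_le[of k] decrease_const_pos
    show "norm ((norm (x (Suc k) - x k))\<^sup>2) \<le> (env k - env (Suc k)) / decrease_const"
      by (simp add: field_simps)
  qed
qed

lemma bounded_if_coercive:
  assumes "(Phi f G \<longlongrightarrow> \<infinity>) at_infinity"
  shows "bounded (range x) \<and> bounded (range z)"
proof -
  obtain b where b: "\<And>y. b \<le> norm y \<Longrightarrow> ereal (env 0) < Phi f G y"
    using assms unfolding tendsto_PInfty eventually_at_infinity by blast
  have "Phi f G (z k) \<le> ereal (env 0)" for k
  proof -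
    have "env k \<le> env 0" using decseq_env by (simp add: decseq_def)
    with Fsum_add_block_decrease_le[of "z k" "x k"] block_decrease_nonneg[of UNIV "x k" "z k"]
    show ?thesis unfolding Phi_z_eq env_def by simp
  qed
  with b have "norm (z k) < b" for k
    by (meson linorder_not_le order_less_le_trans less_irrefl)
  then have z: "bounded (range z)"
    unfolding bounded_iff by (blast intro: less_imp_le)
  from bounded_minus_comp[OF z bounded_z_minus_x] have "bounded (range x)"
    by simp
  with z show ?thesis by blast
qed

end

theorem lemma2p5:
  fixes blk :: "'n::finite \<Rightarrow> 'b::finite"
    and f :: "'b \<Rightarrow> real^'n \<Rightarrow> real"
    and gf :: "'b \<Rightarrow> real^'n \<Rightarrow> real^'n"
    and L gam :: "'b \<Rightarrow> real"
    and G :: "real^'n \<Rightarrow> ereal"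
    and x z :: "nat \<Rightarrow> real^'n"
    and I :: "nat \<Rightarrow> 'b set"
  assumes f_block: "\<And>i u v. blk_part blk i u = blk_part blk i v \<Longrightarrow> f i u = f i v"
    and f_grad: "\<And>i u. (f i has_derivative (\<lambda>h. gf i u \<bullet> h)) (at u)"
    and L_nonneg: "\<And>i. L i \<ge> 0"
    and f_lip: "\<And>i u v. norm (gf i u - gf i v) \<le> L i * norm (blk_part blk i (u - v))"
    and G_proper: "proper_fun G"
    and G_lsc: "lsc G"
    and argmin_ne: "\<exists>xs. \<forall>y. Phi f G xs \<le> Phi f G y"
    and gam_pos: "\<And>i. gam i > 0"
    and gam_lt: "\<And>i. gam i * L i < real CARD('b)"
    and z_T: "\<And>k. z k \<in> Tmap blk gam gf G (x k)"
    and x_upd: "\<And>k j. x (Suc k) $ j = (if blk j \<in> I (Suc k) then z k $ j else x k $ j)"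
  shows "(\<forall>i. (real CARD('b) - gam i * L i) / real CARD('b) > 0)
    \<and> (\<forall>k. FBE blk gam f gf G (x (Suc k))
          \<le> FBE blk gam f gf G (x k)
             - ereal (\<Sum>i\<in>I (Suc k). ((real CARD('b) - gam i * L i) / real CARD('b)) / (2 * gam i)
                        * (norm (blk_part blk i (z k - x k)))^2))
    \<and> decseq (\<lambda>k. FBE blk gam f gf G (x k))
    \<and> (\<exists>\<Phi>s::real. ((\<lambda>k. FBE blk gam f gf G (x k)) \<longlonglongrightarrow> ereal \<Phi>s)
          \<and> (INF y. Phi f G y) \<le> ereal \<Phi>s
          \<and> (\<forall>p. (\<exists>r. strict_mono r \<and> (x \<circ> r) \<longlonglongrightarrow> p) \<longrightarrow> FBE blk gam f gf G p = ereal \<Phi>s))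
    \<and> summable (\<lambda>k. (norm (x (Suc k) - x k))^2)
    \<and> ((Phi f G \<longlongrightarrow> \<infinity>) at_infinity \<longrightarrow> bounded (range x) \<and> bounded (range z))"
proof -
  interpret block_coordinate_iteration blk f gf L gam G x z I
    by unfold_locales (fact assms)+
  obtain l where l: "env \<longlonglongrightarrow> l" "Phi_min \<le> l"
    using env_converges by blast
  have decrease: "FBE blk gam f gf G (x (Suc k))
      \<le> FBE blk gam f gf G (x k) - ereal (block_decrease (I (Suc k)) (x k) (z k))" for k
    using env_Suc_le[of k] by (simp add: FBE_x_eq_env)
  have mono: "decseq (\<lambda>k. FBE blk gam f gf G (x k))"
    using decseq_env by (simp add: FBE_x_eq_env decseq_def)
  have limit: "(\<lambda>k. FBE blk gam f gf G (x k)) \<longlonglongrightarrow> ereal l" "(INF y. Phi f G y) \<le> ereal l"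
    using l by (simp_all add: FBE_x_eq_env INF_Phi_eq tendsto_ereal)
  have accumulation: "FBE blk gam f gf G p = ereal l" if "strict_mono r" "(x \<circ> r) \<longlonglongrightarrow> p" for r p
    using limit_le_FBE_at_accumulation_point[OF that l(1)]
      FBE_at_accumulation_point_le_limit[OF that l(1)] by (rule antisym[rotated])
  show ?thesis
    by (intro conjI allI impI exI[of _ l] xi_pos[unfolded xi_def]
        decrease[unfolded block_decrease_def xi_def] mono limit summable_power2_norm_step)
      (blast intro: accumulation dest: bounded_if_coercive)+
qed

end
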